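(* Assume $e_{-1}+e_{+1}<1$. For any two measurable classifiers $f,g:\mathcal X\to\{-1,+1\}$, $$\mathbb E_{\tilde{\mathcal D}}[\mathbb 1_{\mathrm{peer}}(f(X),\tilde Y)]\le\mathbb E_{\tilde{\mathcal D}}[\mathbb 1_{\mathrm{peer}}(g(X),\tilde Y)]\iff R_{-1}(f)+R_{+1}(f)\le R_{-1}(g)+R_{+1}(g),$$ i.e. minimizing $\mathbb E_{\tilde{\mathcal D}}[\mathbb 1_{\mathrm{peer}}(f(X),\tilde Y)]$ is equivalent to minimizing $R_{-1}(f)+R_{+1}(f)$.
   Context: Let $\mathcal X\subseteq\mathbb R^d$ and let $(X,Y)$ be a random pair with distribution $\mathcal D$ on $\mathcal X\times\{-1,+1\}$, with $p:=\mathbb P(Y=+1)\in(0,1)$. A noisy label $\tilde Y\in\{-1,+1\}$ is generated with noise rates $e_{+1}:=\mathbb P(\tilde Y=-1\mid Y=+1)$, $e_{-1}:=\mathbb P(\tilde Y=+1\mid Y=-1)$, where $\tilde Y$ is conditionally independent of $X$ given $Y$; $\tilde{\mathcal D}$ is the distribution of $(X,\tilde Y)$. For a classifier $f$, $R_{+1}(f):=\mathbb P(f(X)=-1\mid Y=+1)$ and $R_{-1}(f):=\mathbb P(f(X)=+1\mid Y=-1)$. The 0-1 loss is $\mathbb 1(a,b)=1$ if $a\neq b$ and $0$ otherwise, and $$\mathbb E_{\tilde{\mathcal D}}[\mathbb 1_{\mathrm{peer}}(f(X),\tilde Y)]:=\mathbb E[\mathbb 1(f(X),\tilde Y)]-\mathbb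 E[\mathbb 1(f(X_1),\tilde Y_2)],$$ where $(X,\tilde Y),(X_1,\tilde Y_1),(X_2,\tilde Y_2)$ are i.i.d. draws from $\tilde{\mathcal D}$. *)

theory Defs
  imports "HOL-Probability.Probability"
begin

definition loss01 :: "int \<Rightarrow> int \<Rightarrow> real" where
  "loss01 a b = (if a \<noteq> b then 1 else 0)"

definition cprob :: "'w measure \<Rightarrow> 'w set \<Rightarrow> 'w set \<Rightarrow> real" where
  "cprob M A B = measure M (A \<inter> B) / measure M B"

text \<open>Expected peer 0-1 loss under a distribution D of (X, noisy label):
  E[1(f X, Y~)] - E[1(f X1, Y~2)], where (X1,Y~1),(X2,Y~2) are i.i.d. draws from D.\<close>
definition peer_risk :: "('a \<times> int) measure \<Rightarrow> ('a \<Rightarrow> int) \<Rightarrow> real" where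
  "peer_risk D f =
     (\<integral>z. loss01 (f (fst z)) (snd z) \<partial>D)
     - (\<integral>zz. loss01 (f (fst (fst zz))) (snd (snd zz)) \<partial>(D \<Otimes>\<^sub>M D))"

end

theory Submission
  imports Defs
begin

text \<open>With labels in {-1, 1}, the peer loss of a classifier f is
  P(C \<noteq> T) - P(C \<noteq> T') for C = f X, T = Y~ and T' an independent copy of T, that is
  -Cov(C, T)/2. Since C and T are conditionally independent given the binary clean label Y,
  the covariance reduces to p (1 - p) times the product of the jumps of the conditional means
  E[C | Y] and E[T | Y], which are 2 (1 - R_-1(f) - R_+1(f)) and 2 (1 - e_-1 - e_+1).
  Hence the peer risk is 2 p (1 - p) (1 - e_-1 - e_+1) (R_-1(f) + R_+1(f) - 1), a strictly
  increasing function of R_-1(f) + R_+1(f) when e_-1 + e_+1 < 1.\<close>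

lemma cprob_Collect:
  "cprob M {\<omega> \<in> space M. P \<omega>} {\<omega> \<in> space M. Q \<omega>}
     = measure M {\<omega> \<in> space M. P \<omega> \<and> Q \<omega>} / measure M {\<omega> \<in> space M. Q \<omega>}"
  unfolding cprob_def by (simp add: Int_def conj_ac)

context prob_space
begin

lemma prob_eq_sum_values:
  assumes S: "finite S" "\<And>\<omega>. \<omega> \<in> space M \<Longrightarrow> V \<omega> \<in> S"
    and V: "\<And>v. v \<in> S \<Longrightarrow> {\<omega> \<in> space M. V \<omega> = v} \<in> events"
  shows "\<P>(\<omega> in M. P (V \<omega>)) = (\<Sum>v\<in>S. if P v then \<P>(\<omega> in M. V \<omega> = v) else 0)"
proof -
  have "{\<omega> \<in> space M. P (V \<omega>)} = (\<Union>v\<in>{v\<in>S. P v}. {\<omega> \<in> space M. V \<omega> = v})"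
    using S(2) by auto
  then have "{\<omega> \<in> space M. P (V \<omega>)} \<in> events"
    using S(1) V by auto
  then have "\<P>(\<omega> in M. P (V \<omega>)) = (\<Sum>v\<in>{v\<in>S. P v}. \<P>(\<omega> in M. V \<omega> = v))"
    using S V by (intro prob_sum) auto
  then show ?thesis
    using S(1) by (simp add: sum.inter_filter)
qed

lemma prob_binary_total:
  fixes Y :: "'a \<Rightarrow> int"
  assumes [measurable]: "Y \<in> measurable M (count_space UNIV)"
    and "\<And>\<omega>. \<omega> \<in> space M \<Longrightarrow> Y \<omega> \<in> {-1, 1}"
  shows "\<P>(\<omega> in M. Y \<omega> = 1) + \<P>(\<omega> in M. Y \<omega> = -1) = 1"
  using prob_eq_sum_values[of "{-1, 1}" Y "\<lambda>_. True"] assms(2) by (simp add: add.commute prob_space)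

lemma cprob_binary_compl:
  fixes Z :: "'a \<Rightarrow> int"
  assumes [measurable]: "Z \<in> measurable M (count_space UNIV)" "Measurable.pred M Q"
    and "\<And>\<omega>. \<omega> \<in> space M \<Longrightarrow> Z \<omega> \<in> {-1, 1}"
    and pos: "0 < \<P>(\<omega> in M. Q \<omega>)"
  shows "cprob M {\<omega> \<in> space M. Z \<omega> = -1} {\<omega> \<in> space M. Q \<omega>}
     = 1 - cprob M {\<omega> \<in> space M. Z \<omega> = 1} {\<omega> \<in> space M. Q \<omega>}"
proof -
  have "\<P>(\<omega> in M. Q \<omega>) = \<P>(\<omega> in M. snd (Z \<omega>, Q \<omega>))"
    by simp
  also have "\<dots> = \<P>(\<omega> in M. Z \<omega> = 1 \<and> Q \<omega>) + \<P>(\<omega> in M. Z \<omega> = -1 \<and> Q \<omega>)"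
    by (subst prob_eq_sum_values[where S = "{-1, 1} \<times> UNIV"])
      (use assms(3) in \<open>auto simp: UNIV_bool\<close>)
  finally show ?thesis
    using pos by (simp add: cprob_Collect field_simps)
qed

lemma cond_indep_binary_disagreement:
  fixes C T Y :: "'a \<Rightarrow> int"
  assumes [measurable]: "C \<in> measurable M (count_space UNIV)" "T \<in> measurable M (count_space UNIV)"
      "Y \<in> measurable M (count_space UNIV)"
    and binary: "\<And>\<omega>. \<omega> \<in> space M \<Longrightarrow> C \<omega> \<in> {-1, 1} \<and> T \<omega> \<in> {-1, 1} \<and> Y \<omega> \<in> {-1, 1}"
    and pos: "\<And>y. y \<in> {-1, 1} \<Longrightarrow> 0 < \<P>(\<omega> in M. Y \<omega> = y)"
    and cond_indep: "\<And>c t y. \<P>(\<omega> in M. C \<omega> = c \<and> T \<omega> = t \<and> Y \<omega> = y) * \<P>(\<omega> in M. Y \<omega> = y)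
      = \<P>(\<omega> in M. C \<omega> = c \<and> Y \<omega> = y) * \<P>(\<omega> in M. T \<omega> = t \<and> Y \<omega> = y)"
  shows "\<P>(\<omega> in M. C \<omega> \<noteq> T \<omega>) - (\<Sum>c\<in>{-1, 1}. \<P>(\<omega> in M. C \<omega> = c) * \<P>(\<omega> in M. T \<omega> \<noteq> c))
    = - 2 * \<P>(\<omega> in M. Y \<omega> = 1) * \<P>(\<omega> in M. Y \<omega> = -1)
        * (cprob M {\<omega> \<in> space M. C \<omega> = 1} {\<omega> \<in> space M. Y \<omega> = 1}
           - cprob M {\<omega> \<in> space M. C \<omega> = 1} {\<omega> \<in> space M. Y \<omega> = -1})
        * (cprob M {\<omega> \<in> space M. T \<omega> = 1} {\<omega> \<in> space M. Y \<omega> = 1}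
           - cprob M {\<omega> \<in> space M. T \<omega> = 1} {\<omega> \<in> space M. Y \<omega> = -1})"
proof -
  define p where "p y = \<P>(\<omega> in M. Y \<omega> = y)" for y
  define \<alpha> where "\<alpha> c y = cprob M {\<omega> \<in> space M. C \<omega> = c} {\<omega> \<in> space M. Y \<omega> = y}" for c y
  define \<beta> where "\<beta> t y = cprob M {\<omega> \<in> space M. T \<omega> = t} {\<omega> \<in> space M. Y \<omega> = y}" for t y
  let ?B = "{-1, 1} :: int set"
  have compl: "\<alpha> (-1) y = 1 - \<alpha> 1 y" "\<beta> (-1) y = 1 - \<beta> 1 y" if "y \<in> ?B" for y
    unfolding \<alpha>_def \<beta>_def using binary pos[OF that] by (auto intro!: cprob_binary_compl)
  have cell: "\<P>(\<omega> in M. C \<omega> = c \<and> T \<omega> = t \<and> Y \<omega> = y) = p y * \<alpha> c y * \<beta> t y" if "y \<in> ?B" for c t y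
    using cond_indep[of c t y] pos[OF that] unfolding p_def \<alpha>_def \<beta>_def cprob_Collect
    by (simp add: field_simps)
  have law: "\<P>(\<omega> in M. P (C \<omega>, T \<omega>, Y \<omega>)) = (\<Sum>v\<in>?B \<times> ?B \<times> ?B. if P v then
      (case v of (c, t, y) \<Rightarrow> p y * \<alpha> c y * \<beta> t y) else 0)" for P
  proof -
    have "\<P>(\<omega> in M. P (C \<omega>, T \<omega>, Y \<omega>)) = (\<Sum>v\<in>?B \<times> ?B \<times> ?B. if P v then
        \<P>(\<omega> in M. (C \<omega>, T \<omega>, Y \<omega>) = v) else 0)"
    proof (rule prob_eq_sum_values)
      fix v :: "int \<times> int \<times> int"
      show "{\<omega> \<in> space M. (C \<omega>, T \<omega>, Y \<omega>) = v} \<in> events"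
        by (cases v) simp
    qed (use binary in \<open>auto simp del: insert_Times_insert\<close>)
    also have "\<dots> = (\<Sum>v\<in>?B \<times> ?B \<times> ?B. if P v then
        (case v of (c, t, y) \<Rightarrow> p y * \<alpha> c y * \<beta> t y) else 0)"
      by (rule sum.cong) (auto simp: cell simp del: insert_Times_insert)
    finally show ?thesis .
  qed
  have total: "p 1 + p (-1) = 1"
    unfolding p_def using binary by (intro prob_binary_total) auto
  have "\<P>(\<omega> in M. C \<omega> \<noteq> T \<omega>) - (\<Sum>c\<in>?B. \<P>(\<omega> in M. C \<omega> = c) * \<P>(\<omega> in M. T \<omega> \<noteq> c))
    = - 2 * p 1 * p (-1) * (\<alpha> 1 1 - \<alpha> 1 (-1)) * (\<beta> 1 1 - \<beta> 1 (-1))"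
  proof -
    have disagree: "\<P>(\<omega> in M. C \<omega> \<noteq> T \<omega>) = (\<Sum>y\<in>?B. p y * (\<alpha> 1 y * \<beta> (-1) y + \<alpha> (-1) y * \<beta> 1 y))"
      using law[of "\<lambda>(c, t, y). c \<noteq> t"] by (simp add: algebra_simps)
    have marg_C: "\<P>(\<omega> in M. C \<omega> = c) = (\<Sum>y\<in>?B. p y * \<alpha> c y)" if "c \<in> ?B" for c
      using law[of "\<lambda>(c', t, y). c' = c"] that by (auto simp: compl algebra_simps)
    have marg_T: "\<P>(\<omega> in M. T \<omega> \<noteq> c) = (\<Sum>y\<in>?B. p y * \<beta> (- c) y)" if "c \<in> ?B" for c
      using law[of "\<lambda>(c', t, y). t \<noteq> c"] that by (auto simp: compl algebra_simps)
    show ?thesis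
      using total by (simp add: disagree marg_C marg_T compl) algebra
  qed
  then show ?thesis
    unfolding p_def \<alpha>_def \<beta>_def .
qed

end

lemma measure_pair_measure_Times:
  assumes "finite_measure M1" "finite_measure M2" "A \<in> sets M1" "B \<in> sets M2"
  shows "measure (M1 \<Otimes>\<^sub>M M2) (A \<times> B) = measure M1 A * measure M2 B"
proof -
  interpret M2: finite_measure M2 by fact
  show ?thesis
    using assms(3,4) by (simp add: measure_def M2.emeasure_pair_measure_Times enn2real_mult)
qed

lemma peer_risk_eq_prob:
  fixes D :: "('a \<times> int) measure" and h :: "'a \<Rightarrow> int"
  assumes "prob_space D"
    and [measurable]: "(\<lambda>z. h (fst z)) \<in> measurable D (count_space UNIV)" "snd \<in> measurable D (count_space UNIV)"
    and binary: "\<And>z. z \<in> space D \<Longrightarrow> h (fst z) \<in> {-1, 1}"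
  shows "peer_risk D h = \<P>(z in D. h (fst z) \<noteq> snd z)
    - (\<Sum>c\<in>{-1, 1}. \<P>(z in D. h (fst z) = c) * \<P>(z in D. snd z \<noteq> c))"
proof -
  interpret D: prob_space D by fact
  interpret DD: pair_prob_space D D ..
  define A where "A c = {z \<in> space D. h (fst z) = c}" for c
  define B where "B c = {z \<in> space D. snd z \<noteq> c}" for c
  have [measurable]: "A c \<in> sets D" "B c \<in> sets D" for c
    unfolding A_def B_def by measurable
  have first: "(\<integral>z. loss01 (h (fst z)) (snd z) \<partial>D)
      = (\<integral>z. indicator {z \<in> space D. h (fst z) \<noteq> snd z} z \<partial>D)"
    by (rule Bochner_Integration.integral_cong) (auto simp: loss01_def)
  have loss_rectangles: "loss01 (h (fst (fst zz))) (snd (snd zz))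
      = indicator (A 1 \<times> B 1) zz + indicator (A (-1) \<times> B (-1)) zz" if "zz \<in> space (D \<Otimes>\<^sub>M D)" for zz
  proof -
    have "fst zz \<in> space D" "snd zz \<in> space D"
      using that by (auto simp: space_pair_measure)
    with binary[of "fst zz"] show ?thesis
      by (auto simp: loss01_def A_def B_def indicator_def mem_Times_iff)
  qed
  have "(\<integral>zz. loss01 (h (fst (fst zz))) (snd (snd zz)) \<partial>(D \<Otimes>\<^sub>M D))
      = (\<integral>zz. indicator (A 1 \<times> B 1) zz + indicator (A (-1) \<times> B (-1)) zz \<partial>(D \<Otimes>\<^sub>M D))"
    using loss_rectangles by (rule Bochner_Integration.integral_cong[OF refl])
  also have "\<dots> = measure D (A 1) * measure D (B 1) + measure D (A (-1)) * measure D (B (-1))"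
    by (subst Bochner_Integration.integral_add)
      (auto simp: less_top[symmetric] measure_pair_measure_Times D.finite_measure_axioms)
  finally show ?thesis
    unfolding peer_risk_def first A_def B_def by (simp add: Int_absorb2)
qed

lemma peer_risk_distr_pair:
  fixes X :: "'w \<Rightarrow> 'a" and T :: "'w \<Rightarrow> int" and h :: "'a \<Rightarrow> int"
  assumes "prob_space M" and X[measurable]: "X \<in> measurable M N"
    and [measurable]: "T \<in> measurable M (count_space UNIV)"
      "h \<in> measurable N (count_space UNIV)"
    and binary: "\<And>x. x \<in> space N \<Longrightarrow> h x \<in> {-1, 1}"
  shows "peer_risk (distr M (N \<Otimes>\<^sub>M count_space UNIV) (\<lambda>\<omega>. (X \<omega>, T \<omega>))) h
    = \<P>(\<omega> in M. h (X \<omega>) \<noteq> T \<omega>) - (\<Sum>c\<in>{-1, 1}. \<P>(\<omega> in M. h (X \<omega>) = c) * \<P>(\<omega> in M. T \<omega> \<noteq> c))"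
proof -
  let ?D = "distr M (N \<Otimes>\<^sub>M count_space UNIV) (\<lambda>\<omega>. (X \<omega>, T \<omega>))"
  have law: "\<P>(z in ?D. \<Phi> (h (fst z)) (snd z)) = \<P>(\<omega> in M. \<Phi> (h (X \<omega>)) (T \<omega>))" for \<Phi>
    by (subst measure_distr) (auto intro!: arg_cong[where f = "measure M"] simp: space_pair_measure measurable_space[OF X])
  have "peer_risk ?D h = \<P>(z in ?D. h (fst z) \<noteq> snd z)
    - (\<Sum>c\<in>{-1, 1}. \<P>(z in ?D. h (fst z) = c) * \<P>(z in ?D. snd z \<noteq> c))"
  proof (rule peer_risk_eq_prob)
    show "prob_space ?D"
      by (rule prob_space.prob_space_distr) (use \<open>prob_space M\<close> in auto)
    show "h (fst z) \<in> {-1, 1}" if "z \<in> space ?D" for z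
      by (rule binary) (use that in \<open>auto simp: space_pair_measure\<close>)
  qed auto
  then show ?thesis
    using law[of "(\<noteq>)"] law[of "\<lambda>c _. c = 1"] law[of "\<lambda>c _. c = -1"]
      law[of "\<lambda>_ t. t \<noteq> 1"] law[of "\<lambda>_ t. t \<noteq> -1"] by simp
qed

lemma peer_risk_eq_scaled_error_sum:
  fixes M :: "'w measure" and N :: "'a measure" and X :: "'w \<Rightarrow> 'a" and Y Yt :: "'w \<Rightarrow> int"
    and h :: "'a \<Rightarrow> int"
  assumes prob: "prob_space M"
    and X[measurable]: "X \<in> measurable M N"
    and [measurable]: "Y \<in> measurable M (count_space UNIV)" "Yt \<in> measurable M (count_space UNIV)"
    and Y_binary: "\<And>\<omega>. \<omega> \<in> space M \<Longrightarrow> Y \<omega> \<in> {-1, 1}"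
    and Yt_binary: "\<And>\<omega>. \<omega> \<in> space M \<Longrightarrow> Yt \<omega> \<in> {-1, 1}"
    and p_pos: "0 < \<P>(\<omega> in M. Y \<omega> = 1)" and p_lt1: "\<P>(\<omega> in M. Y \<omega> = 1) < 1"
    and cond_indep: "\<And>A y yt. A \<in> sets N \<Longrightarrow>
        \<P>(\<omega> in M. X \<omega> \<in> A \<and> Yt \<omega> = yt \<and> Y \<omega> = y) * \<P>(\<omega> in M. Y \<omega> = y)
        = \<P>(\<omega> in M. X \<omega> \<in> A \<and> Y \<omega> = y) * \<P>(\<omega> in M. Yt \<omega> = yt \<and> Y \<omega> = y)"
    and [measurable]: "h \<in> measurable N (count_space UNIV)"
    and h_binary: "\<And>x. x \<in> space N \<Longrightarrow> h x \<in> {-1, 1}"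
  shows "peer_risk (distr M (N \<Otimes>\<^sub>M count_space UNIV) (\<lambda>\<omega>. (X \<omega>, Yt \<omega>))) h
    = 2 * \<P>(\<omega> in M. Y \<omega> = 1) * \<P>(\<omega> in M. Y \<omega> = -1)
      * (1 - (cprob M {\<omega> \<in> space M. Yt \<omega> = 1} {\<omega> \<in> space M. Y \<omega> = -1}
              + cprob M {\<omega> \<in> space M. Yt \<omega> = -1} {\<omega> \<in> space M. Y \<omega> = 1}))
      * (cprob M {\<omega> \<in> space M. h (X \<omega>) = 1} {\<omega> \<in> space M. Y \<omega> = -1}
         + cprob M {\<omega> \<in> space M. h (X \<omega>) = -1} {\<omega> \<in> space M. Y \<omega> = 1} - 1)"
    (is "_ = ?rhs")
proof -
  interpret prob_space M by (fact prob)
  have hX_binary: "h (X \<omega>) \<in> {-1, 1}" if "\<omega> \<in> space M" for \<omega>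
    using h_binary measurable_space[OF X that] .
  have total: "\<P>(\<omega> in M. Y \<omega> = 1) + \<P>(\<omega> in M. Y \<omega> = -1) = 1"
    using Y_binary by (intro prob_binary_total) auto
  have pos: "0 < \<P>(\<omega> in M. Y \<omega> = y)" if "y \<in> {-1, 1}" for y
    using that p_pos p_lt1 total by auto
  have hX_cond_indep: "\<P>(\<omega> in M. h (X \<omega>) = c \<and> Yt \<omega> = t \<and> Y \<omega> = y) * \<P>(\<omega> in M. Y \<omega> = y)
      = \<P>(\<omega> in M. h (X \<omega>) = c \<and> Y \<omega> = y) * \<P>(\<omega> in M. Yt \<omega> = t \<and> Y \<omega> = y)" for c t y
  proof -
    have "h -` {c} \<inter> space N \<in> sets N"
      by measurable
    moreover have "X \<omega> \<in> h -` {c} \<inter> space N \<longleftrightarrow> h (X \<omega>) = c" if "\<omega> \<in> space M" for \<omega>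
      using measurable_space[OF X that] by auto
    ultimately show ?thesis
      using cond_indep[of "h -` {c} \<inter> space N" t y] by (simp cong: conj_cong)
  qed
  have "peer_risk (distr M (N \<Otimes>\<^sub>M count_space UNIV) (\<lambda>\<omega>. (X \<omega>, Yt \<omega>))) h
    = \<P>(\<omega> in M. h (X \<omega>) \<noteq> Yt \<omega>)
      - (\<Sum>c\<in>{-1, 1}. \<P>(\<omega> in M. h (X \<omega>) = c) * \<P>(\<omega> in M. Yt \<omega> \<noteq> c))"
    using prob h_binary by (intro peer_risk_distr_pair) auto
  also have "\<dots> = - 2 * \<P>(\<omega> in M. Y \<omega> = 1) * \<P>(\<omega> in M. Y \<omega> = -1)
        * (cprob M {\<omega> \<in> space M. h (X \<omega>) = 1} {\<omega> \<in> space M. Y \<omega> = 1}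
           - cprob M {\<omega> \<in> space M. h (X \<omega>) = 1} {\<omega> \<in> space M. Y \<omega> = -1})
        * (cprob M {\<omega> \<in> space M. Yt \<omega> = 1} {\<omega> \<in> space M. Y \<omega> = 1}
           - cprob M {\<omega> \<in> space M. Yt \<omega> = 1} {\<omega> \<in> space M. Y \<omega> = -1})"
    using hX_binary Y_binary Yt_binary pos hX_cond_indep
    by (intro cond_indep_binary_disagreement) auto
  also have "\<dots> = ?rhs"
  proof -
    have "cprob M {\<omega> \<in> space M. h (X \<omega>) = 1} {\<omega> \<in> space M. Y \<omega> = 1}
        = 1 - cprob M {\<omega> \<in> space M. h (X \<omega>) = -1} {\<omega> \<in> space M. Y \<omega> = 1}"
      "cprob M {\<omega> \<in> space M. Yt \<omega> = 1} {\<omega> \<in> space M. Y \<omega> = 1}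
        = 1 - cprob M {\<omega> \<in> space M. Yt \<omega> = -1} {\<omega> \<in> space M. Y \<omega> = 1}"
      using cprob_binary_compl[of "\<lambda>\<omega>. h (X \<omega>)" "\<lambda>\<omega>. Y \<omega> = 1"]
        cprob_binary_compl[of Yt "\<lambda>\<omega>. Y \<omega> = 1"] hX_binary Yt_binary pos[of 1]
      by auto
    then show ?thesis
      by (simp only:) (simp add: algebra_simps)
  qed
  finally show ?thesis .
qed

theorem lemma3:
  fixes M :: "'w measure"
    and \<X> :: "'a::euclidean_space set"
    and X :: "'w \<Rightarrow> 'a" and Y Yt :: "'w \<Rightarrow> int"
    and f g :: "'a \<Rightarrow> int"
  assumes prob: "prob_space M"
    and X_meas: "X \<in> measurable M (restrict_space borel \<X>)"
    and Y_meas: "Y \<in> measurable M (count_space UNIV)"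
    and Yt_meas: "Yt \<in> measurable M (count_space UNIV)"
    and Y_vals: "\<And>\<omega>. \<omega> \<in> space M \<Longrightarrow> Y \<omega> \<in> {-1, 1}"
    and Yt_vals: "\<And>\<omega>. \<omega> \<in> space M \<Longrightarrow> Yt \<omega> \<in> {-1, 1}"
    and p_pos: "0 < measure M {\<omega> \<in> space M. Y \<omega> = 1}"
    and p_lt1: "measure M {\<omega> \<in> space M. Y \<omega> = 1} < 1"
    and cond_indep: "\<And>A y yt. A \<in> sets (restrict_space borel \<X>) \<Longrightarrow>
        measure M {\<omega> \<in> space M. X \<omega> \<in> A \<and> Yt \<omega> = yt \<and> Y \<omega> = y} * measure M {\<omega> \<in> space M. Y \<omega> = y}
        = measure M {\<omega> \<in> space M. X \<omega> \<in> A \<and> Y \<omega> = y} * measure M {\<omega> \<in> space M. Yt \<omega> = yt \<and> Y \<omega> = y}"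
    and noise: "cprob M {\<omega> \<in> space M. Yt \<omega> = 1} {\<omega> \<in> space M. Y \<omega> = -1}
              + cprob M {\<omega> \<in> space M. Yt \<omega> = -1} {\<omega> \<in> space M. Y \<omega> = 1} < 1"
    and f_meas: "f \<in> measurable (restrict_space borel \<X>) (count_space UNIV)"
    and g_meas: "g \<in> measurable (restrict_space borel \<X>) (count_space UNIV)"
    and f_vals: "\<And>x. x \<in> \<X> \<Longrightarrow> f x \<in> {-1, 1}"
    and g_vals: "\<And>x. x \<in> \<X> \<Longrightarrow> g x \<in> {-1, 1}"
  shows "peer_risk (distr M (restrict_space borel \<X> \<Otimes>\<^sub>M count_space UNIV) (\<lambda>\<omega>. (X \<omega>, Yt \<omega>))) f
           \<le> peer_risk (distr M (restrict_space borel \<X> \<Otimes>\<^sub>M count_space UNIV) (\<lambda>\<omega>. (X \<omega>, Yt \<omega>))) g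
         \<longleftrightarrow>
         cprob M {\<omega> \<in> space M. f (X \<omega>) = 1} {\<omega> \<in> space M. Y \<omega> = -1}
           + cprob M {\<omega> \<in> space M. f (X \<omega>) = -1} {\<omega> \<in> space M. Y \<omega> = 1}
         \<le> cprob M {\<omega> \<in> space M. g (X \<omega>) = 1} {\<omega> \<in> space M. Y \<omega> = -1}
           + cprob M {\<omega> \<in> space M. g (X \<omega>) = -1} {\<omega> \<in> space M. Y \<omega> = 1}"
proof -
  interpret prob_space M by (fact prob)
  let ?N = "restrict_space borel \<X>"
  define K where "K = 2 * \<P>(\<omega> in M. Y \<omega> = 1) * \<P>(\<omega> in M. Y \<omega> = -1)
      * (1 - (cprob M {\<omega> \<in> space M. Yt \<omega> = 1} {\<omega> \<in> space M. Y \<omega> = -1}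
              + cprob M {\<omega> \<in> space M. Yt \<omega> = -1} {\<omega> \<in> space M. Y \<omega> = 1}))"
  have peer: "peer_risk (distr M (?N \<Otimes>\<^sub>M count_space UNIV) (\<lambda>\<omega>. (X \<omega>, Yt \<omega>))) h
      = K * (cprob M {\<omega> \<in> space M. h (X \<omega>) = 1} {\<omega> \<in> space M. Y \<omega> = -1}
             + cprob M {\<omega> \<in> space M. h (X \<omega>) = -1} {\<omega> \<in> space M. Y \<omega> = 1} - 1)"
    if "h \<in> measurable ?N (count_space UNIV)" "\<And>x. x \<in> \<X> \<Longrightarrow> h x \<in> {-1, 1}" for h
    unfolding K_def mult.assoc[symmetric]
    using prob X_meas Y_meas Yt_meas Y_vals Yt_vals p_pos p_lt1 cond_indep that
    by (intro peer_risk_eq_scaled_error_sum) (auto simp: space_restrict_space)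
  have "\<P>(\<omega> in M. Y \<omega> = 1) + \<P>(\<omega> in M. Y \<omega> = -1) = 1"
    using Y_meas Y_vals by (rule prob_binary_total)
  then have "0 < K"
    using p_pos p_lt1 noise unfolding K_def by simp
  then show ?thesis
    using peer[OF f_meas f_vals] peer[OF g_meas g_vals] by simp
qed

end
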